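(* With the notation below, for every $v\in\hat T\setminus\partial\hat T$, $$m_v=\theta\sum_{w:(v,w)\in\hat T}D_w^*\Big(\int f(x_w^\xi)\,dQ_w^+(\xi)-\int f(x_w^\xi)\,dQ_w^-(\xi)\Big),\qquad f(x)=\log\frac{\cosh(x/2)+\theta\sinh(x/2)}{\cosh(x/2)-\theta\sinh(x/2)}.$$
   Context: $T$ is a finite rooted tree (root $\rho$, leaves $\partial T$, $T_v$ the subtree of $v$ and its descendants), $\beta>0$, $\theta=\tanh\beta$, Ising Gibbs density $\propto\exp(\beta\sum_{uv}\sigma(u)\sigma(v))$, $\tau\in\{\pm1\}^{\partial T}$, and $\mu_v^\tau$ is the Gibbs measure on $T_v$ conditioned on $\tau$ on $\partial T\cap T_v$. $\hat T$ is a connected subtree of $T\setminus\partial T$ containing $\rho$ with leaves $\partial\hat T$, $\hat T_v=T_v\cap\hat T$; $\hat\mu_v^\xi$ is the Gibbs measure on $\hat T_v$ conditioned on $\xi\in\{\pm1\}^{\partial\hat T}$ on $\partial\hat T\cap\hat T_v$. $Q_v^{\pm}(\xi)=\mu_v^\tau(\sigma_{\partial\hat T_v}=\xi_{\partial\hat T_v}\mid\sigma(v)=\pm1)$; $x_v^\xi=\log\big(\hat\mu_v^\xi(\sigma(v)=1)/\hat\mu_v^\xi(\sigma(v)=-1)\big)$ (equal to $\pm\infty$ at leaves of $\hat T$); $m_v=\int x_v^\xi dQ_v^+-\int x_v^\xi dQ_v^-$; $x_w^*=\log\big(\mu_w^\tau(\sigma(w)=1)/\mu_w^\tau(\sigma(w)=-1)\big)$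 and $D_w^*=\cosh^2\beta/(\cosh^2\beta+\cosh^2(x_w^*/2)-1)$. *)

theory Defs
  imports Complex_Main "HOL-Library.Extended_Real" "HOL-Library.FuncSet"
begin

text \<open>A finite rooted tree with vertex set V, root r and parent map par
 (convention: par r = r). The edges are the pairs (par w, w) for w in V - {r}.\<close>

definition rooted_tree :: "'v set \<Rightarrow> 'v \<Rightarrow> ('v \<Rightarrow> 'v) \<Rightarrow> bool" where
  "rooted_tree V r par \<longleftrightarrow> finite V \<and> r \<in> V \<and> par r = r \<and>
     (\<forall>v\<in>V - {r}. par v \<in> V) \<and> (\<forall>v\<in>V. \<exists>n. (par ^^ n) v = r)"

definition children :: "'v set \<Rightarrow> 'v \<Rightarrow> ('v \<Rightarrow> 'v) \<Rightarrow> 'v \<Rightarrow> 'v set" where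
  "children V r par v = {w \<in> V. w \<noteq> r \<and> par w = v}"

definition leaves :: "'v set \<Rightarrow> 'v \<Rightarrow> ('v \<Rightarrow> 'v) \<Rightarrow> 'v set" where
  "leaves V r par = {v \<in> V. children V r par v = {}}"

definition subtree :: "'v set \<Rightarrow> ('v \<Rightarrow> 'v) \<Rightarrow> 'v \<Rightarrow> 'v set" where
  "subtree V par v = {w \<in> V. \<exists>n. (par ^^ n) w = v}"

definition root_subtree :: "'v set \<Rightarrow> 'v \<Rightarrow> ('v \<Rightarrow> 'v) \<Rightarrow> 'v set \<Rightarrow> bool" where
  "root_subtree V r par H \<longleftrightarrow> H \<subseteq> V - leaves V r par \<and> r \<in> H \<and>
     (\<forall>w\<in>H - {r}. par w \<in> H)"

definition configs :: "'v set \<Rightarrow> ('v \<Rightarrow> real) set" where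
  "configs S = S \<rightarrow>\<^sub>E {-1, 1}"

definition energy :: "('v \<Rightarrow> 'v) \<Rightarrow> 'v set \<Rightarrow> 'v \<Rightarrow> ('v \<Rightarrow> real) \<Rightarrow> real" where
  "energy par S v \<sigma> = (\<Sum>w\<in>S - {v}. \<sigma> (par w) * \<sigma> w)"

definition adm :: "'v set \<Rightarrow> 'v set \<Rightarrow> ('v \<Rightarrow> real) \<Rightarrow> ('v \<Rightarrow> real) set" where
  "adm S B \<tau> = {\<sigma> \<in> configs S. \<forall>u\<in>B. \<sigma> u = \<tau> u}"

definition gibbs_prob :: "real \<Rightarrow> ('v \<Rightarrow> 'v) \<Rightarrow> 'v set \<Rightarrow> 'v \<Rightarrow> 'v set \<Rightarrow> ('v \<Rightarrow> real)
    \<Rightarrow> (('v \<Rightarrow> real) \<Rightarrow> bool) \<Rightarrow> real" where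
  "gibbs_prob \<beta> par S v B \<tau> E =
     (\<Sum>\<sigma>\<in>{\<sigma> \<in> adm S B \<tau>. E \<sigma>}. exp (\<beta> * energy par S v \<sigma>)) /
     (\<Sum>\<sigma>\<in>adm S B \<tau>. exp (\<beta> * energy par S v \<sigma>))"

definition mu :: "'v set \<Rightarrow> 'v \<Rightarrow> ('v \<Rightarrow> 'v) \<Rightarrow> real \<Rightarrow> ('v \<Rightarrow> real) \<Rightarrow> 'v
    \<Rightarrow> (('v \<Rightarrow> real) \<Rightarrow> bool) \<Rightarrow> real" where
  "mu V r par \<beta> \<tau> v E =
     gibbs_prob \<beta> par (subtree V par v) v (leaves V r par \<inter> subtree V par v) \<tau> E"

definition muhat :: "'v set \<Rightarrow> 'v \<Rightarrow> ('v \<Rightarrow> 'v) \<Rightarrow> 'v set \<Rightarrow> real \<Rightarrow> ('v \<Rightarrow> real) \<Rightarrow> 'v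
    \<Rightarrow> (('v \<Rightarrow> real) \<Rightarrow> bool) \<Rightarrow> real" where
  "muhat V r par H \<beta> \<xi> v E =
     gibbs_prob \<beta> par (subtree V par v \<inter> H) v (leaves H r par \<inter> subtree V par v) \<xi> E"

definition hleaves :: "'v set \<Rightarrow> 'v \<Rightarrow> ('v \<Rightarrow> 'v) \<Rightarrow> 'v set \<Rightarrow> 'v \<Rightarrow> 'v set" where
  "hleaves V r par H v = leaves H r par \<inter> subtree V par v"

definition Q :: "'v set \<Rightarrow> 'v \<Rightarrow> ('v \<Rightarrow> 'v) \<Rightarrow> 'v set \<Rightarrow> real \<Rightarrow> ('v \<Rightarrow> real) \<Rightarrow> real \<Rightarrow> 'v
    \<Rightarrow> ('v \<Rightarrow> real) \<Rightarrow> real" where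
  "Q V r par H \<beta> \<tau> s v \<eta> =
     mu V r par \<beta> \<tau> v (\<lambda>\<sigma>. (\<forall>u\<in>hleaves V r par H v. \<sigma> u = \<eta> u) \<and> \<sigma> v = s) /
     mu V r par \<beta> \<tau> v (\<lambda>\<sigma>. \<sigma> v = s)"

definition xhat_real :: "'v set \<Rightarrow> 'v \<Rightarrow> ('v \<Rightarrow> 'v) \<Rightarrow> 'v set \<Rightarrow> real \<Rightarrow> ('v \<Rightarrow> real) \<Rightarrow> 'v \<Rightarrow> real" where
  "xhat_real V r par H \<beta> \<xi> v =
     ln (muhat V r par H \<beta> \<xi> v (\<lambda>\<sigma>. \<sigma> v = 1) / muhat V r par H \<beta> \<xi> v (\<lambda>\<sigma>. \<sigma> v = -1))"

definition xhat :: "'v set \<Rightarrow> 'v \<Rightarrow> ('v \<Rightarrow> 'v) \<Rightarrow> 'v set \<Rightarrow> real \<Rightarrow> ('v \<Rightarrow> real) \<Rightarrow> 'v \<Rightarrow> ereal" where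
  "xhat V r par H \<beta> \<xi> v =
     (if v \<in> leaves H r par then (if \<xi> v = 1 then \<infinity> else -\<infinity>)
      else ereal (xhat_real V r par H \<beta> \<xi> v))"

definition mm :: "'v set \<Rightarrow> 'v \<Rightarrow> ('v \<Rightarrow> 'v) \<Rightarrow> 'v set \<Rightarrow> real \<Rightarrow> ('v \<Rightarrow> real) \<Rightarrow> 'v \<Rightarrow> real" where
  "mm V r par H \<beta> \<tau> v =
     (\<Sum>\<eta>\<in>configs (hleaves V r par H v). Q V r par H \<beta> \<tau> 1 v \<eta> * xhat_real V r par H \<beta> \<eta> v)
   - (\<Sum>\<eta>\<in>configs (hleaves V r par H v). Q V r par H \<beta> \<tau> (-1) v \<eta> * xhat_real V r par H \<beta> \<eta> v)"

definition xstar :: "'v set \<Rightarrow> 'v \<Rightarrow> ('v \<Rightarrow> 'v) \<Rightarrow> real \<Rightarrow> ('v \<Rightarrow> real) \<Rightarrow> 'v \<Rightarrow> real" where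
  "xstar V r par \<beta> \<tau> w =
     ln (mu V r par \<beta> \<tau> w (\<lambda>\<sigma>. \<sigma> w = 1) / mu V r par \<beta> \<tau> w (\<lambda>\<sigma>. \<sigma> w = -1))"

definition Dstar :: "'v set \<Rightarrow> 'v \<Rightarrow> ('v \<Rightarrow> 'v) \<Rightarrow> real \<Rightarrow> ('v \<Rightarrow> real) \<Rightarrow> 'v \<Rightarrow> real" where
  "Dstar V r par \<beta> \<tau> w =
     (cosh \<beta>)\<^sup>2 / ((cosh \<beta>)\<^sup>2 + (cosh (xstar V r par \<beta> \<tau> w / 2))\<^sup>2 - 1)"

text \<open>f(x) = log((cosh(x/2)+theta sinh(x/2))/(cosh(x/2)-theta sinh(x/2))),
  extended continuously to +-infinity (limits +-log((1+theta)/(1-theta))).\<close>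
definition fth :: "real \<Rightarrow> ereal \<Rightarrow> real" where
  "fth \<theta> x = (case x of
       ereal y \<Rightarrow> ln ((cosh (y/2) + \<theta> * sinh (y/2)) / (cosh (y/2) - \<theta> * sinh (y/2)))
     | PInfty \<Rightarrow> ln ((1 + \<theta>) / (1 - \<theta>))
     | MInfty \<Rightarrow> - ln ((1 + \<theta>) / (1 - \<theta>)))"

end

theory Submission
  imports Defs
begin

(*
  Every probability in the statement is a ratio of finite sums of Boltzmann weights, so we
  work with restricted partition functions  pfun beta par S u B tau t g : the g-weighted sum
  of Boltzmann weights of the configurations on S that agree with tau on B and have spin t
  at the root u of S.  The basic structural fact (pfun_split) is that cutting the edge from
  u to a child w with subtree D factorises the partition function into that of S - D times
  the message  msg beta t z = exp(beta t) z(+1) + exp(-beta t) z(-1)  of the child, where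
  z(s) are the partition functions of D.  Two consequences carry the proof:
   (i) cutting all children of v in the pruned tree gives the recursion
       x_v = sum_w f(x_w) for the log-likelihood ratios (xhat_recursion);
  (ii) cutting a single child w of v in the full tree shows that for an observable g of the
       leaves of the pruned tree below w,
       E[g|sigma(v)=+] - E[g|sigma(v)=-] = theta D*_w (E[g|sigma(w)=+] - E[g|sigma(w)=-])
       (Qexp_difference_child); the right factor is the two-point identity mixture_difference.
  The theorem follows by inserting (i) into the definition of m_v and applying (ii) to each
  child.
*)


lemma configs_finite: "finite L \<Longrightarrow> finite (configs L)"
  unfolding configs_def by (intro finite_PiE) auto

lemma adm_finite: "finite S \<Longrightarrow> finite (adm S B \<tau>)"
  unfolding adm_def by (rule finite_subset[OF _ configs_finite]) auto

lemma adm_spin: "\<sigma> \<in> adm S B \<tau> \<Longrightarrow> u \<in> S \<Longrightarrow> \<sigma> u = 1 \<or> \<sigma> u = -1"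
  by (auto simp: adm_def configs_def PiE_iff)

lemma adm_cong: "\<forall>u\<in>B. \<tau> u = \<tau>' u \<Longrightarrow> adm S B \<tau> = adm S B \<tau>'"
  unfolding adm_def by auto

lemma sum_by_spin:
  fixes X :: "('v \<Rightarrow> real) set" and h :: "real \<Rightarrow> ('v \<Rightarrow> real) \<Rightarrow> real"
  assumes "finite X" "\<And>\<sigma>. \<sigma> \<in> X \<Longrightarrow> \<sigma> w = 1 \<or> \<sigma> w = -1"
  shows "(\<Sum>\<sigma>\<in>X. h (\<sigma> w) \<sigma>) =
    (\<Sum>\<sigma>\<in>{\<sigma>\<in>X. \<sigma> w = 1}. h 1 \<sigma>) + (\<Sum>\<sigma>\<in>{\<sigma>\<in>X. \<sigma> w = -1}. h (-1) \<sigma>)"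
proof -
  have X: "X = {\<sigma>\<in>X. \<sigma> w = 1} \<union> {\<sigma>\<in>X. \<sigma> w = -1}" using assms(2) by auto
  have "(\<Sum>\<sigma>\<in>X. h (\<sigma> w) \<sigma>) =
      (\<Sum>\<sigma>\<in>{\<sigma>\<in>X. \<sigma> w = 1}. h (\<sigma> w) \<sigma>) + (\<Sum>\<sigma>\<in>{\<sigma>\<in>X. \<sigma> w = -1}. h (\<sigma> w) \<sigma>)"
    using assms(1) by (subst X, subst sum.union_disjoint) auto
  also have "\<dots> = (\<Sum>\<sigma>\<in>{\<sigma>\<in>X. \<sigma> w = 1}. h 1 \<sigma>) + (\<Sum>\<sigma>\<in>{\<sigma>\<in>X. \<sigma> w = -1}. h (-1) \<sigma>)"
    by (intro arg_cong2[where f = "(+)"] sum.cong) auto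
  finally show ?thesis .
qed

lemma adm_glue:
  assumes "D \<subseteq> S"
  shows "bij_betw (\<lambda>\<sigma>. (restrict \<sigma> (S - D), restrict \<sigma> D))
           (adm S (B \<inter> S) \<tau>) (adm (S - D) (B \<inter> (S - D)) \<tau> \<times> adm D (B \<inter> D) \<tau>)"
proof (rule bij_betwI[where g = "\<lambda>(\<sigma>\<^sub>1, \<sigma>\<^sub>2) u. if u \<in> D then \<sigma>\<^sub>2 u else \<sigma>\<^sub>1 u"])
  show "(\<lambda>\<sigma>. (restrict \<sigma> (S - D), restrict \<sigma> D)) \<in>
      adm S (B \<inter> S) \<tau> \<rightarrow> adm (S - D) (B \<inter> (S - D)) \<tau> \<times> adm D (B \<inter> D) \<tau>"
    using assms by (auto simp: adm_def configs_def)
  show "(\<lambda>(\<sigma>\<^sub>1, \<sigma>\<^sub>2) u. if u \<in> D then \<sigma>\<^sub>2 u else \<sigma>\<^sub>1 u) \<in>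
      adm (S - D) (B \<inter> (S - D)) \<tau> \<times> adm D (B \<inter> D) \<tau> \<rightarrow> adm S (B \<inter> S) \<tau>"
    using assms by (auto simp: adm_def configs_def PiE_iff extensional_def; blast)
  show "(\<lambda>(\<sigma>\<^sub>1, \<sigma>\<^sub>2) u. if u \<in> D then \<sigma>\<^sub>2 u else \<sigma>\<^sub>1 u) (restrict \<sigma> (S - D), restrict \<sigma> D) = \<sigma>"
    if "\<sigma> \<in> adm S (B \<inter> S) \<tau>" for \<sigma>
    using that assms by (auto simp: adm_def configs_def PiE_iff extensional_def fun_eq_iff)
  show "(restrict ((\<lambda>(\<sigma>\<^sub>1, \<sigma>\<^sub>2) u. if u \<in> D then \<sigma>\<^sub>2 u else \<sigma>\<^sub>1 u) p) (S - D),
         restrict ((\<lambda>(\<sigma>\<^sub>1, \<sigma>\<^sub>2) u. if u \<in> D then \<sigma>\<^sub>2 u else \<sigma>\<^sub>1 u) p) D) = p"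
    if "p \<in> adm (S - D) (B \<inter> (S - D)) \<tau> \<times> adm D (B \<inter> D) \<tau>" for p
    using that by (auto simp: adm_def configs_def PiE_iff extensional_def fun_eq_iff)
qed

lemma sum_adm_product:
  fixes a c :: "('v \<Rightarrow> real) \<Rightarrow> real" and b :: "real \<Rightarrow> real \<Rightarrow> real"
  assumes fin: "finite S" and DS: "D \<subseteq> S" and v: "v \<in> S - D" and w: "w \<in> D"
    and a_local: "\<And>\<sigma> \<sigma>'. \<forall>u\<in>S - D. \<sigma> u = \<sigma>' u \<Longrightarrow> a \<sigma> = a \<sigma>'"
    and c_local: "\<And>\<sigma> \<sigma>'. \<forall>u\<in>D. \<sigma> u = \<sigma>' u \<Longrightarrow> c \<sigma> = c \<sigma>'"
  shows "(\<Sum>\<sigma>\<in>adm S (B \<inter> S) \<tau>. a \<sigma> * b (\<sigma> v) (\<sigma> w) * c \<sigma>)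
       = (\<Sum>\<sigma>\<in>adm (S - D) (B \<inter> (S - D)) \<tau>.
            a \<sigma> * (\<Sum>\<sigma>'\<in>adm D (B \<inter> D) \<tau>. b (\<sigma> v) (\<sigma>' w) * c \<sigma>'))"
proof -
  define F where "F p = a (fst p) * b (fst p v) (snd p w) * c (snd p)" for p :: "('v \<Rightarrow> real) \<times> ('v \<Rightarrow> real)"
  have "(\<Sum>\<sigma>\<in>adm S (B \<inter> S) \<tau>. a \<sigma> * b (\<sigma> v) (\<sigma> w) * c \<sigma>)
      = (\<Sum>\<sigma>\<in>adm S (B \<inter> S) \<tau>. F (restrict \<sigma> (S - D), restrict \<sigma> D))"
  proof (rule sum.cong[OF refl])
    fix \<sigma> :: "'v \<Rightarrow> real"
    have "a (restrict \<sigma> (S - D)) = a \<sigma>" "c (restrict \<sigma> D) = c \<sigma>"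
      by (rule a_local, simp, rule c_local, simp)
    then show "a \<sigma> * b (\<sigma> v) (\<sigma> w) * c \<sigma> = F (restrict \<sigma> (S - D), restrict \<sigma> D)"
      unfolding F_def using v w by simp
  qed
  also have "\<dots> = (\<Sum>p\<in>adm (S - D) (B \<inter> (S - D)) \<tau> \<times> adm D (B \<inter> D) \<tau>. F p)"
    by (rule sum.reindex_bij_betw[OF adm_glue[OF DS]])
  also have "\<dots> = (\<Sum>\<sigma>\<in>adm (S - D) (B \<inter> (S - D)) \<tau>.
      a \<sigma> * (\<Sum>\<sigma>'\<in>adm D (B \<inter> D) \<tau>. b (\<sigma> v) (\<sigma>' w) * c \<sigma>'))"
    unfolding F_def by (simp add: sum.cartesian_product case_prod_beta sum_distrib_left mult.assoc)
  finally show ?thesis .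
qed

lemma sum_configs_fibres:
  fixes X :: "('v \<Rightarrow> real) set" and g h :: "('v \<Rightarrow> real) \<Rightarrow> real"
  assumes fX: "finite X" and fL: "finite L" and spins: "\<forall>\<sigma>\<in>X. \<forall>u\<in>L. \<sigma> u = 1 \<or> \<sigma> u = -1"
  shows "(\<Sum>\<eta>\<in>configs L. (\<Sum>\<sigma>\<in>{\<sigma>\<in>X. (\<forall>u\<in>L. \<sigma> u = \<eta> u) \<and> P \<sigma>}. h \<sigma>) * g \<eta>)
       = (\<Sum>\<sigma>\<in>{\<sigma>\<in>X. P \<sigma>}. h \<sigma> * g (restrict \<sigma> L))"
proof -
  let ?XP = "{\<sigma>\<in>X. P \<sigma>}"
  let ?t = "\<lambda>\<eta> \<sigma>. if \<eta> = restrict \<sigma> L then h \<sigma> * g (restrict \<sigma> L) else 0"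
  have "(\<Sum>\<eta>\<in>configs L. (\<Sum>\<sigma>\<in>{\<sigma>\<in>X. (\<forall>u\<in>L. \<sigma> u = \<eta> u) \<and> P \<sigma>}. h \<sigma>) * g \<eta>)
      = (\<Sum>\<eta>\<in>configs L. \<Sum>\<sigma>\<in>?XP. ?t \<eta> \<sigma>)"
  proof (rule sum.cong[OF refl])
    fix \<eta> assume "\<eta> \<in> configs L"
    then have "{\<sigma>\<in>X. (\<forall>u\<in>L. \<sigma> u = \<eta> u) \<and> P \<sigma>} = {\<sigma>\<in>?XP. \<eta> = restrict \<sigma> L}"
      by (auto simp: configs_def PiE_iff extensional_def fun_eq_iff)
    then show "(\<Sum>\<sigma>\<in>{\<sigma>\<in>X. (\<forall>u\<in>L. \<sigma> u = \<eta> u) \<and> P \<sigma>}. h \<sigma>) * g \<eta> = (\<Sum>\<sigma>\<in>?XP. ?t \<eta> \<sigma>)"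
      using fX by (simp add: sum.inter_filter[symmetric] sum_distrib_right if_distrib cong: if_cong)
  qed
  also have "\<dots> = (\<Sum>\<sigma>\<in>?XP. \<Sum>\<eta>\<in>configs L. ?t \<eta> \<sigma>)"
    by (rule sum.swap)
  also have "\<dots> = (\<Sum>\<sigma>\<in>?XP. h \<sigma> * g (restrict \<sigma> L))"
  proof (rule sum.cong[OF refl])
    fix \<sigma> assume "\<sigma> \<in> ?XP"
    then have "restrict \<sigma> L \<in> configs L" using spins by (auto simp: configs_def)
    then show "(\<Sum>\<eta>\<in>configs L. ?t \<eta> \<sigma>) = h \<sigma> * g (restrict \<sigma> L)"
      using configs_finite[OF fL] by (simp add: sum.delta)
  qed
  finally show ?thesis .
qed


section \<open>Energy and restricted partition functions\<close>

lemma energy_split: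
  assumes fin: "finite S" and DS: "D \<subseteq> S" and v: "v \<in> S - D" and w: "w \<in> D"
  shows "energy par S v \<sigma> = energy par (S - D) v \<sigma> + \<sigma> (par w) * \<sigma> w + energy par D w \<sigma>"
proof -
  have fD: "finite D" using fin DS by (rule finite_subset[rotated])
  have S: "S - {v} = ((S - D) - {v}) \<union> D" using DS v by auto
  have "energy par S v \<sigma> = (\<Sum>u\<in>(S - D) - {v}. \<sigma> (par u) * \<sigma> u) + (\<Sum>u\<in>D. \<sigma> (par u) * \<sigma> u)"
    unfolding energy_def S using fin fD by (subst sum.union_disjoint) auto
  also have "(\<Sum>u\<in>D. \<sigma> (par u) * \<sigma> u) = \<sigma> (par w) * \<sigma> w + (\<Sum>u\<in>D - {w}. \<sigma> (par u) * \<sigma> u)"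
    using fD w by (rule sum.remove)
  finally show ?thesis unfolding energy_def by simp
qed

lemma energy_local:
  "\<forall>u\<in>X. \<sigma> u = \<sigma>' u \<Longrightarrow> \<forall>u\<in>X - {v}. par u \<in> X \<Longrightarrow> energy par X v \<sigma> = energy par X v \<sigma>'"
  unfolding energy_def by (rule sum.cong) auto

definition pfun :: "real \<Rightarrow> ('v \<Rightarrow> 'v) \<Rightarrow> 'v set \<Rightarrow> 'v \<Rightarrow> 'v set \<Rightarrow> ('v \<Rightarrow> real) \<Rightarrow> real
    \<Rightarrow> (('v \<Rightarrow> real) \<Rightarrow> real) \<Rightarrow> real" where
  "pfun \<beta> par S u B \<tau> t g =
     (\<Sum>\<sigma>\<in>{\<sigma>\<in>adm S (B \<inter> S) \<tau>. \<sigma> u = t}. exp (\<beta> * energy par S u \<sigma>) * g \<sigma>)"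

text \<open>The weight passed along an edge to a parent with spin s by a child whose subtree has
  partition functions z(+1), z(-1).\<close>
definition msg :: "real \<Rightarrow> real \<Rightarrow> (real \<Rightarrow> real) \<Rightarrow> real" where
  "msg \<beta> s z = exp (\<beta> * s) * z 1 + exp (- (\<beta> * s)) * z (-1)"

lemma msg_spin:
  "msg \<beta> 1 z = exp \<beta> * z 1 + exp (- \<beta>) * z (-1)"
  "msg \<beta> (-1) z = exp (- \<beta>) * z 1 + exp \<beta> * z (-1)"
  by (simp_all add: msg_def)

lemma msg_pos: "z 1 > 0 \<Longrightarrow> z (-1) > 0 \<Longrightarrow> msg \<beta> s z > 0"
  unfolding msg_def by (simp add: add_pos_pos)

lemma pfun_if:
  "finite S \<Longrightarrow> pfun \<beta> par S u B \<tau> t g =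
     (\<Sum>\<sigma>\<in>adm S (B \<inter> S) \<tau>. if \<sigma> u = t then exp (\<beta> * energy par S u \<sigma>) * g \<sigma> else 0)"
  unfolding pfun_def by (simp add: sum.inter_filter adm_finite)

lemma pfun_pos:
  assumes "finite S" "u \<in> S" "t = 1 \<or> t = -1" "\<forall>x\<in>B \<inter> S. \<tau> x = 1 \<or> \<tau> x = -1"
    "u \<in> B \<Longrightarrow> \<tau> u = t"
  shows "0 < pfun \<beta> par S u B \<tau> t (\<lambda>_. 1)"
proof -
  let ?\<sigma> = "\<lambda>x\<in>S. if x = u then t else if x \<in> B then \<tau> x else 1"
  have "?\<sigma> \<in> {\<sigma>\<in>adm S (B \<inter> S) \<tau>. \<sigma> u = t}"
    using assms by (auto simp: adm_def configs_def PiE_iff)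
  then show ?thesis unfolding pfun_def using adm_finite[OF assms(1)]
    by (intro sum_pos) auto
qed

lemma pfun_boundary_root:
  assumes "u \<in> B \<inter> S" "t \<noteq> \<tau> u"
  shows "pfun \<beta> par S u B \<tau> t g = 0"
proof -
  have no_config: "{\<sigma>\<in>adm S (B \<inter> S) \<tau>. \<sigma> u = t} = {}" using assms unfolding adm_def by auto
  show ?thesis unfolding pfun_def no_config by simp
qed

lemma pfun_singleton:
  assumes "v \<notin> B" "s = 1 \<or> s = -1"
  shows "pfun \<beta> par {v} v B \<eta> s (\<lambda>_. 1) = 1"
proof -
  have "{\<sigma>\<in>adm {v} (B \<inter> {v}) \<eta>. \<sigma> v = s} = {\<lambda>x\<in>{v}. s}"
    using assms by (auto simp: adm_def configs_def PiE_iff extensional_def fun_eq_iff)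
  moreover have "energy par {v} v \<sigma> = 0" for \<sigma> unfolding energy_def by simp
  ultimately show ?thesis unfolding pfun_def by simp
qed

lemma pfun_total:
  assumes "finite S" "u \<in> S"
  shows "(\<Sum>\<sigma>\<in>adm S (B \<inter> S) \<tau>. exp (\<beta> * energy par S u \<sigma>)) =
    pfun \<beta> par S u B \<tau> 1 (\<lambda>_. 1) + pfun \<beta> par S u B \<tau> (-1) (\<lambda>_. 1)"
  unfolding pfun_def
  by (simp add: sum_by_spin[where h = "\<lambda>_ \<sigma>. exp (\<beta> * energy par S u \<sigma>)", simplified]
      adm_finite[OF assms(1)] adm_spin[OF _ assms(2)])

lemma gibbs_prob_root:
  assumes "finite S" "u \<in> S"
  shows "gibbs_prob \<beta> par S u (B \<inter> S) \<tau> (\<lambda>\<sigma>. \<sigma> u = t) =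
    pfun \<beta> par S u B \<tau> t (\<lambda>_. 1) / (pfun \<beta> par S u B \<tau> 1 (\<lambda>_. 1) + pfun \<beta> par S u B \<tau> (-1) (\<lambda>_. 1))"
proof -
  have "B \<inter> S \<inter> S = B \<inter> S" by auto
  then show ?thesis unfolding gibbs_prob_def pfun_total[OF assms, symmetric] by (simp add: pfun_def)
qed

lemma pfun_split:
  fixes f :: "('v \<Rightarrow> real) \<Rightarrow> real"
  assumes fin: "finite S" and DS: "D \<subseteq> S" and v: "v \<in> S - D" and w: "w \<in> D" and pw: "par w = v"
    and closed_rest: "\<forall>u\<in>(S - D) - {v}. par u \<in> S - D" and closed_D: "\<forall>u\<in>D - {w}. par u \<in> D"
    and f_local: "\<And>\<sigma> \<sigma>'. \<forall>u\<in>D. \<sigma> u = \<sigma>' u \<Longrightarrow> f \<sigma> = f \<sigma>'"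
  shows "pfun \<beta> par S v B \<tau> s f =
    pfun \<beta> par (S - D) v B \<tau> s (\<lambda>_. 1) * msg \<beta> s (\<lambda>t. pfun \<beta> par D w B \<tau> t f)"
proof -
  have fD: "finite D" using fin DS by (rule finite_subset[rotated])
  define a where "a \<sigma> = (if \<sigma> v = s then exp (\<beta> * energy par (S - D) v \<sigma>) else 0)" for \<sigma>
  define c where "c \<sigma> = exp (\<beta> * energy par D w \<sigma>) * f \<sigma>" for \<sigma>
  define K where "K = (\<Sum>\<sigma>'\<in>adm D (B \<inter> D) \<tau>. exp (\<beta> * (s * \<sigma>' w)) * c \<sigma>')"
  have "pfun \<beta> par S v B \<tau> s f =
      (\<Sum>\<sigma>\<in>adm S (B \<inter> S) \<tau>. a \<sigma> * (\<lambda>x y. exp (\<beta> * (x * y))) (\<sigma> v) (\<sigma> w) * c \<sigma>)"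
    unfolding pfun_if[OF fin] a_def c_def
    by (rule sum.cong[OF refl]) (simp add: energy_split[OF fin DS v w] pw distrib_left exp_add)
  also have "\<dots> = (\<Sum>\<sigma>\<in>adm (S - D) (B \<inter> (S - D)) \<tau>.
      a \<sigma> * (\<Sum>\<sigma>'\<in>adm D (B \<inter> D) \<tau>. (\<lambda>x y. exp (\<beta> * (x * y))) (\<sigma> v) (\<sigma>' w) * c \<sigma>'))"
  proof (rule sum_adm_product[OF fin DS v w])
    fix \<sigma> \<sigma>' :: "'v \<Rightarrow> real" assume "\<forall>u\<in>S - D. \<sigma> u = \<sigma>' u"
    then show "a \<sigma> = a \<sigma>'"
      unfolding a_def using energy_local[OF _ closed_rest] v by simp
  next
    fix \<sigma> \<sigma>' :: "'v \<Rightarrow> real" assume "\<forall>u\<in>D. \<sigma> u = \<sigma>' u"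
    then show "c \<sigma> = c \<sigma>'"
      unfolding c_def using energy_local[OF _ closed_D] f_local by metis
  qed
  also have "\<dots> = (\<Sum>\<sigma>\<in>adm (S - D) (B \<inter> (S - D)) \<tau>. a \<sigma> * K)"
    unfolding K_def a_def by (rule sum.cong[OF refl]) auto
  also have "\<dots> = pfun \<beta> par (S - D) v B \<tau> s (\<lambda>_. 1) * K"
    unfolding pfun_if[OF finite_Diff[OF fin]] sum_distrib_right a_def by (rule sum.cong) auto
  also have "K = msg \<beta> s (\<lambda>t. pfun \<beta> par D w B \<tau> t f)"
    unfolding K_def msg_def pfun_def c_def
    by (simp add: sum_by_spin[where h = "\<lambda>x \<sigma>'. exp (\<beta> * (s * x)) * (exp (\<beta> * energy par D w \<sigma>') * f \<sigma>')"]
        adm_finite[OF fD] adm_spin[OF _ w] sum_distrib_left)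
  finally show ?thesis .
qed

lemma pfun_factorise:
  assumes fin: "finite S" and v: "v \<in> S" and C: "finite C"
    and closed_S: "\<forall>u\<in>S - {v}. par u \<in> S"
    and D_sub: "\<And>c. c \<in> C \<Longrightarrow> D c \<subseteq> S - {v}" and c_in: "\<And>c. c \<in> C \<Longrightarrow> c \<in> D c"
    and par_c: "\<And>c. c \<in> C \<Longrightarrow> par c = v"
    and closed_D: "\<And>c. c \<in> C \<Longrightarrow> \<forall>u\<in>D c - {c}. par u \<in> D c"
    and down_D: "\<And>c u. c \<in> C \<Longrightarrow> u \<in> S - {v} \<Longrightarrow> par u \<in> D c \<Longrightarrow> u \<in> D c"
    and disjoint: "\<And>c c'. c \<in> C \<Longrightarrow> c' \<in> C \<Longrightarrow> c \<noteq> c' \<Longrightarrow> D c \<inter> D c' = {}"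
  shows "pfun \<beta> par S v B \<tau> s (\<lambda>_. 1) = pfun \<beta> par (S - \<Union>(D ` C)) v B \<tau> s (\<lambda>_. 1) *
    (\<Prod>c\<in>C. msg \<beta> s (\<lambda>t. pfun \<beta> par (D c) c B \<tau> t (\<lambda>_. 1)))"
proof -
  have "pfun \<beta> par S v B \<tau> s (\<lambda>_. 1) = pfun \<beta> par (S - \<Union>(D ` C')) v B \<tau> s (\<lambda>_. 1) *
    (\<Prod>c\<in>C'. msg \<beta> s (\<lambda>t. pfun \<beta> par (D c) c B \<tau> t (\<lambda>_. 1)))" if "C' \<subseteq> C" for C'
    using finite_subset[OF that C] that
  proof (induction C' rule: finite_induct)
    case (insert c C')
    let ?A = "S - \<Union>(D ` C')"
    have c: "c \<in> C" using insert by auto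
    have "D c \<subseteq> ?A" using D_sub[OF c] disjoint[OF c] insert by blast
    moreover have "v \<in> ?A - D c" using v D_sub insert by blast
    moreover have "\<forall>u\<in>(?A - D c) - {v}. par u \<in> ?A - D c"
      using closed_S down_D insert.prems by blast
    ultimately have "pfun \<beta> par ?A v B \<tau> s (\<lambda>_. 1) =
        pfun \<beta> par (?A - D c) v B \<tau> s (\<lambda>_. 1) * msg \<beta> s (\<lambda>t. pfun \<beta> par (D c) c B \<tau> t (\<lambda>_. 1))"
      using fin c_in[OF c] par_c[OF c] closed_D[OF c] by (intro pfun_split) auto
    moreover have "?A - D c = S - \<Union>(D ` insert c C')" by auto
    ultimately show ?case using insert by (simp add: mult.assoc)
  qed simp
  then show ?thesis by blast
qed


section \<open>Hyperbolic identities\<close>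

lemma tanh_via_exp: "tanh (\<beta>::real) = (exp \<beta> * exp \<beta> - 1) / (exp \<beta> * exp \<beta> + 1)"
proof -
  have "exp \<beta> * exp \<beta> + 1 > 0" by (simp add: add_pos_pos)
  then show ?thesis unfolding tanh_altdef exp_minus by (simp add: divide_simps)
qed

lemma cosh_via_exp: "cosh (\<beta>::real) = (exp \<beta> * exp \<beta> + 1) / (2 * exp \<beta>)"
  unfolding cosh_def exp_minus by (simp add: field_simps)

lemma half_log_ratio:
  fixes a b :: real
  assumes "a > 0" "b > 0"
  obtains y where "y > 0" "a = b * (y * y)"
    "cosh (ln (a / b) / 2) = (y * y + 1) / (2 * y)" "sinh (ln (a / b) / 2) = (y * y - 1) / (2 * y)"
proof
  let ?y = "exp (ln (a / b) / 2)"
  have "?y * ?y = a / b" using assms by (simp flip: exp_add)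
  then show "?y > 0" "a = b * (?y * ?y)" using assms by simp_all
  show "cosh (ln (a / b) / 2) = (?y * ?y + 1) / (2 * ?y)"
    unfolding cosh_def exp_minus by (simp add: field_simps)
  show "sinh (ln (a / b) / 2) = (?y * ?y - 1) / (2 * ?y)"
    unfolding sinh_def exp_minus by (simp add: field_simps)
qed

lemma fth_log_ratio:
  assumes a: "z 1 > 0" and b: "z (-1) > 0"
  shows "fth (tanh \<beta>) (ereal (ln (z 1 / z (-1)))) = ln (msg \<beta> 1 z / msg \<beta> (-1) z)"
proof -
  obtain y where y: "y > 0" "z 1 = z (-1) * (y * y)"
    and c: "cosh (ln (z 1 / z (-1)) / 2) = (y * y + 1) / (2 * y)"
    and s: "sinh (ln (z 1 / z (-1)) / 2) = (y * y - 1) / (2 * y)"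
    using half_log_ratio[OF a b] .
  define e where "e = exp \<beta>"
  have e: "e > 0" unfolding e_def by simp
  have "(c0 + t * s0) / (c0 - t * s0) = msg \<beta> 1 z / msg \<beta> (-1) z"
    if "c0 = (y * y + 1) / (2 * y)" "s0 = (y * y - 1) / (2 * y)" "t = (e * e - 1) / (e * e + 1)"
    for c0 s0 t
  proof -
    have "0 < e * e + 1" "0 < y * y + e * e" "0 < e * e * y * y + 1"
      "0 < z (-1) * (y * y) + e * z (-1) * e" "0 < e * (z (-1) * (y * y)) * e + z (-1)"
      using e y b by (simp_all add: add_pos_pos)
    then show ?thesis unfolding that msg_spin y(2) exp_minus e_def[symmetric] using e y b
      by (simp add: divide_simps) (simp add: algebra_simps)
  qed
  then show ?thesis unfolding fth_def by (simp add: c s tanh_via_exp e_def)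
qed

lemma fth_infinity:
  "fth (tanh (\<beta>::real)) \<infinity> = 2 * \<beta>" "fth (tanh \<beta>) (-\<infinity>) = - (2 * \<beta>)"
proof -
  have "0 < exp \<beta> * exp \<beta> + 1" by (simp add: add_pos_pos)
  then have "(1 + tanh \<beta>) / (1 - tanh \<beta>) = exp \<beta> * exp \<beta>"
    unfolding tanh_via_exp by (simp add: divide_simps)
  also have "\<dots> = exp (2 * \<beta>)" by (simp flip: exp_add)
  finally show "fth (tanh \<beta>) \<infinity> = 2 * \<beta>" "fth (tanh \<beta>) (-\<infinity>) = - (2 * \<beta>)"
    by (simp_all add: fth_def)
qed

text \<open>The two-point identity behind the theorem: conditioning a child with partition functions
  z(+-1) and conditional means G(+-1) on the two parent spins, the difference of the means is
  theta D* (G(+1) - G(-1)).\<close>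
lemma mixture_difference:
  assumes a: "z 1 > 0" and b: "z (-1) > 0"
  shows "msg \<beta> 1 (\<lambda>t. z t * G t) / msg \<beta> 1 z - msg \<beta> (-1) (\<lambda>t. z t * G t) / msg \<beta> (-1) z
     = tanh \<beta> * ((cosh \<beta>)\<^sup>2 / ((cosh \<beta>)\<^sup>2 + (cosh (ln (z 1 / z (-1)) / 2))\<^sup>2 - 1)) * (G 1 - G (-1))"
proof -
  obtain y where y: "y > 0" "z 1 = z (-1) * (y * y)"
    and c: "cosh (ln (z 1 / z (-1)) / 2) = (y * y + 1) / (2 * y)"
    using half_log_ratio[OF a b] by metis
  define e where "e = exp \<beta>"
  define b0 where "b0 = z (-1)"
  have e: "e > 0" unfolding e_def by simp
  have pos: "0 < e * e + 1" "0 < y * y + e * e" "0 < e * e * y * y + 1"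
    "0 < b0 * (y * y) + e * b0 * e" "0 < e * (b0 * (y * y)) * e + b0"
    using e y b unfolding b0_def by (simp_all add: add_pos_pos)
  have D: "((e * e + 1) / (2 * e))\<^sup>2 + ((y * y + 1) / (2 * y))\<^sup>2 - 1
      = (e * e * y * y + 1) * (y * y + e * e) / (4 * e * e * y * y)"
    using e y by (simp add: divide_simps power2_eq_square) (simp add: algebra_simps)
  have core: "(e * (b0 * (y * y)) * G 1 + (1 / e) * b0 * G (-1)) / (e * (b0 * (y * y)) + (1 / e) * b0)
      - ((1 / e) * (b0 * (y * y)) * G 1 + e * b0 * G (-1)) / ((1 / e) * (b0 * (y * y)) + e * b0)
      = (e * e - 1) / (e * e + 1) * (((e * e + 1) / (2 * e))\<^sup>2 /
          (((e * e + 1) / (2 * e))\<^sup>2 + ((y * y + 1) / (2 * y))\<^sup>2 - 1)) * (G 1 - G (-1))"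
    unfolding D using e y b pos unfolding b0_def
    by (simp add: divide_simps power2_eq_square) (simp add: algebra_simps)
  show ?thesis
    unfolding msg_spin c tanh_via_exp cosh_via_exp[of \<beta>] exp_minus e_def[symmetric]
    unfolding y(2) b0_def[symmetric] using core by (simp add: inverse_eq_divide mult.assoc)
qed


text \<open>The integral of an observable g of the leaves of the pruned tree below x with respect
  to Q^s_x, written  int g dQ^s_x  in the statement.\<close>
definition Qexp :: "'v set \<Rightarrow> 'v \<Rightarrow> ('v \<Rightarrow> 'v) \<Rightarrow> 'v set \<Rightarrow> real \<Rightarrow> ('v \<Rightarrow> real) \<Rightarrow> real
    \<Rightarrow> 'v \<Rightarrow> (('v \<Rightarrow> real) \<Rightarrow> real) \<Rightarrow> real" where
  "Qexp V r par H \<beta> \<tau> s x g =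
     (\<Sum>\<eta>\<in>configs (hleaves V r par H x). Q V r par H \<beta> \<tau> s x \<eta> * g \<eta>)"

lemma mm_Qexp:
  "mm V r par H \<beta> \<tau> v = Qexp V r par H \<beta> \<tau> 1 v (\<lambda>\<eta>. xhat_real V r par H \<beta> \<eta> v)
     - Qexp V r par H \<beta> \<tau> (-1) v (\<lambda>\<eta>. xhat_real V r par H \<beta> \<eta> v)"
  unfolding mm_def Qexp_def ..

lemma Qexp_cong:
  "(\<And>\<eta>. \<eta> \<in> configs (hleaves V r par H x) \<Longrightarrow> g \<eta> = g' \<eta>) \<Longrightarrow>
    Qexp V r par H \<beta> \<tau> s x g = Qexp V r par H \<beta> \<tau> s x g'"
  unfolding Qexp_def by (rule sum.cong) simp_all

lemma Qexp_sum:
  "Qexp V r par H \<beta> \<tau> s x (\<lambda>\<eta>. \<Sum>w\<in>C. h w \<eta>) = (\<Sum>w\<in>C. Qexp V r par H \<beta> \<tau> s x (h w))"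
  unfolding Qexp_def sum_distrib_left by (rule sum.swap)


section \<open>Rooted trees\<close>

lemma subtree_self: "v \<in> V \<Longrightarrow> v \<in> subtree V par v"
  unfolding subtree_def by (auto intro: exI[of _ 0])

lemma subtree_sub: "subtree V par v \<subseteq> V"
  unfolding subtree_def by auto

lemma subtree_mono: "par w = v \<Longrightarrow> subtree V par w \<subseteq> subtree V par v"
  unfolding subtree_def by (auto intro: exI[of _ "Suc n" for n])

lemma subtree_down:
  assumes "u \<in> V" "par u \<in> subtree V par w"
  shows "u \<in> subtree V par w"
proof -
  obtain n where "(par ^^ n) (par u) = w" using assms(2) unfolding subtree_def by auto
  then have "(par ^^ Suc n) u = w" by (simp add: funpow_Suc_right del: funpow.simps)
  then show ?thesis using assms(1) unfolding subtree_def by blast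
qed

lemma funpow_closed: "\<forall>x\<in>H. par x \<in> H \<Longrightarrow> u \<in> H \<Longrightarrow> (par ^^ k) u \<in> H"
  by (induction k) auto

context
  fixes V :: "'v set" and r :: 'v and par :: "'v \<Rightarrow> 'v"
  assumes tree: "rooted_tree V r par"
begin

lemma tree_finite: "finite V"
  using tree unfolding rooted_tree_def by blast

lemma par_root: "par r = r"
  using tree unfolding rooted_tree_def by blast

lemma par_in: "x \<in> V \<Longrightarrow> par x \<in> V"
  using tree unfolding rooted_tree_def by (cases "x = r") auto

lemma subtree_finite: "finite (subtree V par v)"
  using finite_subset[OF subtree_sub tree_finite] .

lemma no_cycle:
  assumes w: "w \<in> V" and cycle: "(par ^^ Suc n) w = w"
  shows "w = r"
proof -
  obtain m where m: "(par ^^ m) w = r" using tree w unfolding rooted_tree_def by blast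
  have "((par ^^ Suc n) ^^ m) w = w" using cycle by (induction m) simp_all
  then have "(par ^^ (n * m)) ((par ^^ m) w) = w"
    by (metis funpow_add funpow_mult comp_apply mult_Suc add.commute)
  moreover have "(par ^^ k) r = r" for k using par_root by (induction k) simp_all
  ultimately show ?thesis using m by simp
qed

lemma not_in_child_subtree:
  assumes "w \<in> V" "w \<noteq> r" "par w = v"
  shows "v \<notin> subtree V par w"
proof
  assume "v \<in> subtree V par w"
  then obtain n where "(par ^^ n) v = w" unfolding subtree_def by auto
  then have "(par ^^ Suc n) w = w" using assms by (simp add: funpow_Suc_right del: funpow.simps)
  then show False using no_cycle assms by blast
qed

lemma subtree_closed:
  assumes u: "u \<in> subtree V par v" "u \<noteq> v"
  shows "par u \<in> subtree V par v"
proof -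
  obtain n where n: "u \<in> V" "(par ^^ n) u = v" using u unfolding subtree_def by auto
  then obtain k where "n = Suc k" using u(2) by (cases n) auto
  then have "(par ^^ k) (par u) = v" using n by (simp add: funpow_Suc_right del: funpow.simps)
  then show ?thesis using par_in[OF n(1)] unfolding subtree_def by blast
qed

lemma children_disjoint:
  assumes w\<^sub>1: "w\<^sub>1 \<in> V" "w\<^sub>1 \<noteq> r" "par w\<^sub>1 = v" and w\<^sub>2: "w\<^sub>2 \<in> V" "w\<^sub>2 \<noteq> r" "par w\<^sub>2 = v"
    and distinct: "w\<^sub>1 \<noteq> w\<^sub>2"
  shows "subtree V par w\<^sub>1 \<inter> subtree V par w\<^sub>2 = {}"
proof -
  have no_common: "False"
    if up: "(par ^^ n) u = a" "(par ^^ (n + d)) u = b" and ab: "a \<noteq> b" "a \<in> V" "par a = v"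
      and b: "b \<in> V" "b \<noteq> r" "par b = v" for u n d a b
  proof -
    have "(par ^^ d) a = b" using up by (metis funpow_add comp_apply add.commute)
    then obtain d' where "(par ^^ d') v = b" using ab
      by (cases d) (auto simp: funpow_Suc_right simp del: funpow.simps)
    then have "v \<in> subtree V par b" using par_in[OF ab(2)] ab(3) unfolding subtree_def by blast
    then show False using not_in_child_subtree[OF b] by blast
  qed
  show ?thesis
  proof (rule ccontr)
    assume "subtree V par w\<^sub>1 \<inter> subtree V par w\<^sub>2 \<noteq> {}"
    then obtain u n m where n: "(par ^^ n) u = w\<^sub>1" and m: "(par ^^ m) u = w\<^sub>2"
      unfolding subtree_def by auto
    show False
    proof (cases "n \<le> m")
      case True
      then show False using no_common[of n u w\<^sub>1 "m - n" w\<^sub>2] n m w\<^sub>1 w\<^sub>2 distinct by simp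
    next
      case False
      then show False using no_common[of m u w\<^sub>2 "n - m" w\<^sub>1] n m w\<^sub>1 w\<^sub>2 distinct by simp
    qed
  qed
qed

text \<open>Removing the subtree of a child w of v from T_v leaves a tree rooted at v: the edge
  (v, w) is a clean cut, as required by pfun_split.\<close>
lemma child_cut:
  assumes w: "w \<in> V" "w \<noteq> r" "par w = v"
  shows "subtree V par w \<subseteq> subtree V par v" "v \<in> subtree V par v - subtree V par w"
    "w \<in> subtree V par w" "\<forall>u\<in>subtree V par w - {w}. par u \<in> subtree V par w"
    "\<forall>u\<in>(subtree V par v - subtree V par w) - {v}. par u \<in> subtree V par v - subtree V par w"
proof -
  show "subtree V par w \<subseteq> subtree V par v" using subtree_mono[of par w v V] w(3) .
  show "v \<in> subtree V par v - subtree V par w"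
    using subtree_self[OF par_in[OF w(1)]] not_in_child_subtree[OF w] w(3) by simp
  show "w \<in> subtree V par w" using subtree_self[OF w(1)] .
  show "\<forall>u\<in>subtree V par w - {w}. par u \<in> subtree V par w" using subtree_closed[of _ w] by blast
  show "\<forall>u\<in>(subtree V par v - subtree V par w) - {v}. par u \<in> subtree V par v - subtree V par w"
  proof
    fix u assume u: "u \<in> (subtree V par v - subtree V par w) - {v}"
    then have "par u \<in> subtree V par v" using subtree_closed[of u v] by blast
    moreover have "par u \<notin> subtree V par w" using u subtree_down[of u V par w] subtree_sub[of V par v] by blast
    ultimately show "par u \<in> subtree V par v - subtree V par w" by blast
  qed
qed

lemma subtree_child_ancestor:
  assumes u: "u \<in> subtree V par v" "u \<noteq> v"
  obtains k where "par ((par ^^ k) u) = v" "(par ^^ k) u \<noteq> r"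
proof -
  obtain n where n: "(par ^^ n) u = v" "\<forall>m<n. (par ^^ m) u \<noteq> v"
    using u exists_least_iff[of "\<lambda>n. (par ^^ n) u = v"] unfolding subtree_def by blast
  then obtain k where k: "n = Suc k" using u(2) by (cases n) auto
  have "par ((par ^^ k) u) = v" "(par ^^ k) u \<noteq> v" using n k by simp_all
  moreover have "(par ^^ k) u \<noteq> r" using calculation par_root by auto
  ultimately show ?thesis using that by blast
qed

lemma mu_root:
  assumes "x \<in> V"
  shows "mu V r par \<beta> \<tau> x (\<lambda>\<sigma>. \<sigma> x = t) =
    pfun \<beta> par (subtree V par x) x (leaves V r par) \<tau> t (\<lambda>_. 1) /
    (pfun \<beta> par (subtree V par x) x (leaves V r par) \<tau> 1 (\<lambda>_. 1) +
     pfun \<beta> par (subtree V par x) x (leaves V r par) \<tau> (-1) (\<lambda>_. 1))"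
  unfolding mu_def using gibbs_prob_root[OF subtree_finite subtree_self[OF assms]] .

section \<open>The pruned tree\<close>

context
  fixes H :: "'v set"
  assumes hat: "root_subtree V r par H"
begin

lemma hat_sub: "H \<subseteq> V"
  using hat unfolding root_subtree_def by auto

lemma hat_par: "x \<in> H \<Longrightarrow> par x \<in> H"
  using hat par_root unfolding root_subtree_def by (cases "x = r") auto

lemma hat_inner: "x \<in> H \<Longrightarrow> x \<notin> leaves V r par"
  using hat unfolding root_subtree_def by auto

lemma hat_finite: "finite H"
  using finite_subset[OF hat_sub tree_finite] .

lemma hat_subtree_self: "x \<in> H \<Longrightarrow> x \<in> subtree V par x \<inter> H"
  using hat_sub subtree_self[of x V par] by blast

lemma hat_children: "w \<in> children H r par v \<Longrightarrow> w \<in> H \<and> w \<in> V \<and> w \<noteq> r \<and> par w = v"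
  using hat_sub unfolding children_def by auto

lemma hat_subtree_decomp:
  assumes v: "v \<in> H"
  shows "subtree V par v \<inter> H - (\<Union>w\<in>children H r par v. subtree V par w \<inter> H) = {v}"
proof -
  have "u \<in> (\<Union>w\<in>children H r par v. subtree V par w \<inter> H)"
    if u: "u \<in> subtree V par v" "u \<in> H" "u \<noteq> v" for u
  proof -
    obtain k where k: "par ((par ^^ k) u) = v" "(par ^^ k) u \<noteq> r"
      using subtree_child_ancestor[OF u(1,3)] .
    have "(par ^^ k) u \<in> children H r par v"
      using funpow_closed[of H par u k] hat_par u(2) k unfolding children_def by auto
    moreover have "u \<in> subtree V par ((par ^^ k) u)" using u(1) unfolding subtree_def by auto
    ultimately show ?thesis using u(2) by blast
  qed
  moreover have "v \<in> subtree V par v \<inter> H" using hat_subtree_self[OF v] .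
  moreover have "v \<notin> subtree V par w" if "w \<in> children H r par v" for w
    using hat_children[OF that] not_in_child_subtree[of w v] by blast
  ultimately show ?thesis by blast
qed

lemma hat_pfun_product:
  assumes v: "v \<in> H" "v \<notin> leaves H r par" and s: "s = 1 \<or> s = -1"
  shows "pfun \<beta> par (subtree V par v \<inter> H) v (leaves H r par) \<eta> s (\<lambda>_. 1) =
    (\<Prod>w\<in>children H r par v.
       msg \<beta> s (\<lambda>t. pfun \<beta> par (subtree V par w \<inter> H) w (leaves H r par) \<eta> t (\<lambda>_. 1)))"
proof -
  let ?S = "subtree V par v \<inter> H" and ?C = "children H r par v"
  have "pfun \<beta> par ?S v (leaves H r par) \<eta> s (\<lambda>_. 1) =
      pfun \<beta> par (?S - (\<Union>w\<in>?C. subtree V par w \<inter> H)) v (leaves H r par) \<eta> s (\<lambda>_. 1) *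
      (\<Prod>w\<in>?C. msg \<beta> s (\<lambda>t. pfun \<beta> par (subtree V par w \<inter> H) w (leaves H r par) \<eta> t (\<lambda>_. 1)))"
  proof (rule pfun_factorise)
    show "finite ?S" using hat_finite by simp
    show "v \<in> ?S" using hat_subtree_self[OF v(1)] .
    show "finite ?C" using hat_finite unfolding children_def by simp
    show "\<forall>u\<in>?S - {v}. par u \<in> ?S" using subtree_closed[of _ v] hat_par by blast
    show "subtree V par w \<inter> H \<subseteq> ?S - {v}" if "w \<in> ?C" for w
      using hat_children[OF that] subtree_mono[of par w v V] not_in_child_subtree[of w v] by blast
    show "w \<in> subtree V par w \<inter> H" if "w \<in> ?C" for w
      using hat_subtree_self hat_children[OF that] by blast
    show "par w = v" if "w \<in> ?C" for w using hat_children[OF that] by blast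
    show "\<forall>u\<in>(subtree V par w \<inter> H) - {w}. par u \<in> subtree V par w \<inter> H" for w
      using subtree_closed[of _ w] hat_par by blast
    show "u \<in> subtree V par w \<inter> H" if "u \<in> ?S - {v}" "par u \<in> subtree V par w \<inter> H" for w u
      using that subtree_down[of u V par w] subtree_sub[of V par v] by blast
    show "(subtree V par w \<inter> H) \<inter> (subtree V par w' \<inter> H) = {}"
      if "w \<in> ?C" "w' \<in> ?C" "w \<noteq> w'" for w w'
      using children_disjoint[of w v w'] hat_children[OF that(1)] hat_children[OF that(2)] that(3)
      by blast
  qed
  then show ?thesis using hat_subtree_decomp[OF v(1)] pfun_singleton[OF v(2) s] by simp
qed

lemma muhat_root:
  assumes "x \<in> H"
  shows "muhat V r par H \<beta> \<eta> x (\<lambda>\<sigma>. \<sigma> x = t) =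
    pfun \<beta> par (subtree V par x \<inter> H) x (leaves H r par) \<eta> t (\<lambda>_. 1) /
    (pfun \<beta> par (subtree V par x \<inter> H) x (leaves H r par) \<eta> 1 (\<lambda>_. 1) +
     pfun \<beta> par (subtree V par x \<inter> H) x (leaves H r par) \<eta> (-1) (\<lambda>_. 1))"
proof -
  have "leaves H r par \<subseteq> H" unfolding leaves_def by blast
  then have B: "leaves H r par \<inter> subtree V par x = leaves H r par \<inter> (subtree V par x \<inter> H)"
    by blast
  have "finite (subtree V par x \<inter> H)" using hat_finite by simp
  moreover have "x \<in> subtree V par x \<inter> H" using hat_subtree_self[OF assms] .
  ultimately show ?thesis unfolding muhat_def B by (rule gibbs_prob_root)
qed

lemma xhat_local:
  assumes w: "w \<in> H" and agree: "\<forall>u\<in>hleaves V r par H w. \<eta> u = \<eta>' u"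
  shows "xhat V r par H \<beta> \<eta> w = xhat V r par H \<beta> \<eta>' w"
proof (cases "w \<in> leaves H r par")
  case True
  then have "w \<in> hleaves V r par H w" unfolding hleaves_def using hat_subtree_self[OF w] by blast
  then show ?thesis unfolding xhat_def using agree True by simp
next
  case False
  have "adm S (hleaves V r par H w) \<eta> = adm S (hleaves V r par H w) \<eta>'" for S
    by (rule adm_cong[OF agree])
  then show ?thesis using False unfolding xhat_def xhat_real_def muhat_def gibbs_prob_def hleaves_def
    by simp
qed

lemma xhat_child_message:
  fixes \<beta> :: real and \<eta> :: "'v \<Rightarrow> real"
  assumes w: "w \<in> H" and eta: "\<forall>u\<in>hleaves V r par H w. \<eta> u = 1 \<or> \<eta> u = -1"
  defines "z \<equiv> \<lambda>t. pfun \<beta> par (subtree V par w \<inter> H) w (leaves H r par) \<eta> t (\<lambda>_. 1)"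
  shows "msg \<beta> 1 z > 0" "msg \<beta> (-1) z > 0"
    and "fth (tanh \<beta>) (xhat V r par H \<beta> \<eta> w) = ln (msg \<beta> 1 z / msg \<beta> (-1) z)"
proof -
  have fin: "finite (subtree V par w \<inter> H)" using hat_finite by simp
  have w_in: "w \<in> subtree V par w \<inter> H" using hat_subtree_self[OF w] .
  have spins: "\<forall>x\<in>leaves H r par \<inter> (subtree V par w \<inter> H). \<eta> x = 1 \<or> \<eta> x = -1"
    using eta unfolding hleaves_def by auto
  have z_pos: "z t > 0" if "t = 1 \<or> t = -1" "w \<in> leaves H r par \<Longrightarrow> \<eta> w = t" for t
    unfolding z_def using pfun_pos[OF fin w_in that(1) spins] that(2) by blast
  have leaf_value: "msg \<beta> 1 z > 0 \<and> msg \<beta> (-1) z > 0 \<and>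
      fth (tanh \<beta>) (xhat V r par H \<beta> \<eta> w) = ln (msg \<beta> 1 z / msg \<beta> (-1) z)"
    if leaf: "w \<in> leaves H r par" and s: "s = 1 \<or> s = -1" and spin: "\<eta> w = s" for s
  proof -
    have z_s: "z s > 0" using z_pos s spin by blast
    have z_other: "z (- s) = 0" unfolding z_def
      by (rule pfun_boundary_root) (use leaf w_in spin s in auto)
    have ratio: "msg \<beta> 1 z / msg \<beta> (-1) z = exp (2 * \<beta> * s)"
      using s z_s z_other by (auto simp: msg_spin exp_minus field_simps simp flip: exp_add)
    have "fth (tanh \<beta>) (xhat V r par H \<beta> \<eta> w) = 2 * \<beta> * s"
      using s spin leaf by (auto simp: xhat_def fth_infinity)
    moreover have "msg \<beta> 1 z > 0" "msg \<beta> (-1) z > 0"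
      using s z_s z_other by (auto simp: msg_spin)
    ultimately show ?thesis using ratio by simp
  qed
  have "msg \<beta> 1 z > 0 \<and> msg \<beta> (-1) z > 0 \<and>
      fth (tanh \<beta>) (xhat V r par H \<beta> \<eta> w) = ln (msg \<beta> 1 z / msg \<beta> (-1) z)"
  proof (cases "w \<in> leaves H r par")
    case True
    then show ?thesis using leaf_value spins w_in by blast
  next
    case inner: False
    have z: "z 1 > 0" "z (-1) > 0" using z_pos inner by simp_all
    have "xhat_real V r par H \<beta> \<eta> w = ln (z 1 / z (-1))"
    proof -
      have "pfun \<beta> par (subtree V par w \<inter> H) w (leaves H r par) \<eta> t (\<lambda>_. 1) = z t" for t
        unfolding z_def ..
      then show ?thesis unfolding xhat_real_def muhat_root[OF w] using z by simp
    qed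
    then show ?thesis unfolding xhat_def using inner fth_log_ratio[OF z] msg_pos z by simp
  qed
  then show "msg \<beta> 1 z > 0" "msg \<beta> (-1) z > 0"
    "fth (tanh \<beta>) (xhat V r par H \<beta> \<eta> w) = ln (msg \<beta> 1 z / msg \<beta> (-1) z)" by auto
qed

lemma xhat_recursion:
  assumes v: "v \<in> H" "v \<notin> leaves H r par" and eta: "\<eta> \<in> configs (hleaves V r par H v)"
  shows "xhat_real V r par H \<beta> \<eta> v = (\<Sum>w\<in>children H r par v. fth (tanh \<beta>) (xhat V r par H \<beta> \<eta> w))"
proof -
  let ?C = "children H r par v"
  define z where "z w t = pfun \<beta> par (subtree V par w \<inter> H) w (leaves H r par) \<eta> t (\<lambda>_. 1)" for w t
  have child: "msg \<beta> 1 (z w) > 0" "msg \<beta> (-1) (z w) > 0"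
    "fth (tanh \<beta>) (xhat V r par H \<beta> \<eta> w) = ln (msg \<beta> 1 (z w) / msg \<beta> (-1) (z w))"
    if "w \<in> ?C" for w
  proof -
    have "hleaves V r par H w \<subseteq> hleaves V r par H v"
      using subtree_mono[of par w v V] hat_children[OF that] unfolding hleaves_def by blast
    then have "\<forall>u\<in>hleaves V r par H w. \<eta> u = 1 \<or> \<eta> u = -1"
      using eta unfolding configs_def by auto
    moreover have "w \<in> H" using hat_children[OF that] by blast
    ultimately show "msg \<beta> 1 (z w) > 0" "msg \<beta> (-1) (z w) > 0"
      "fth (tanh \<beta>) (xhat V r par H \<beta> \<eta> w) = ln (msg \<beta> 1 (z w) / msg \<beta> (-1) (z w))"
      unfolding z_def using xhat_child_message[of w \<eta> \<beta>] by blast+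
  qed
  have product: "pfun \<beta> par (subtree V par v \<inter> H) v (leaves H r par) \<eta> s (\<lambda>_. 1) =
      (\<Prod>w\<in>?C. msg \<beta> s (z w))" if "s = 1 \<or> s = -1" for s
    unfolding z_def using hat_pfun_product[OF v that] .
  have "(\<Prod>w\<in>?C. msg \<beta> 1 (z w)) > 0" "(\<Prod>w\<in>?C. msg \<beta> (-1) (z w)) > 0"
    using child(1,2) by (auto intro: prod_pos)
  then have "xhat_real V r par H \<beta> \<eta> v = ln ((\<Prod>w\<in>?C. msg \<beta> 1 (z w)) / (\<Prod>w\<in>?C. msg \<beta> (-1) (z w)))"
    unfolding xhat_real_def muhat_root[OF v(1)] product[of 1, simplified] product[of "-1", simplified]
    by simp
  also have "\<dots> = ln (\<Prod>w\<in>?C. msg \<beta> 1 (z w) / msg \<beta> (-1) (z w))"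
    by (simp add: prod_dividef)
  also have "\<dots> = (\<Sum>w\<in>?C. ln (msg \<beta> 1 (z w) / msg \<beta> (-1) (z w)))"
  proof (rule ln_prod)
    show "finite ?C" using hat_finite unfolding children_def by simp
    show "msg \<beta> 1 (z w) / msg \<beta> (-1) (z w) \<noteq> 0" if "w \<in> ?C" for w
      using child(1,2)[OF that] by simp
  qed
  also have "\<dots> = (\<Sum>w\<in>?C. fth (tanh \<beta>) (xhat V r par H \<beta> \<eta> w))"
    using child(3) by simp
  finally show ?thesis .
qed


lemma Qexp_pfun:
  assumes x: "x \<in> H" and tau: "\<forall>u\<in>leaves V r par. \<tau> u \<in> {-1, 1}" and s: "s = 1 \<or> s = -1"
  shows "Qexp V r par H \<beta> \<tau> s x g =
    pfun \<beta> par (subtree V par x) x (leaves V r par) \<tau> s (\<lambda>\<sigma>. g (restrict \<sigma> (hleaves V r par H x))) /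
    pfun \<beta> par (subtree V par x) x (leaves V r par) \<tau> s (\<lambda>_. 1)"
proof -
  define S where "S = subtree V par x"
  define B where "B = leaves V r par"
  define L where "L = hleaves V r par H x"
  define X where "X = adm S (B \<inter> S) \<tau>"
  define W where "W \<sigma> = exp (\<beta> * energy par S x \<sigma>)" for \<sigma>
  define N where "N \<eta> = (\<Sum>\<sigma>\<in>{\<sigma>\<in>X. (\<forall>u\<in>L. \<sigma> u = \<eta> u) \<and> \<sigma> x = s}. W \<sigma>)" for \<eta>
  have fin_S: "finite S" unfolding S_def by (rule subtree_finite)
  have x_S: "x \<in> S" unfolding S_def using hat_subtree_self[OF x] by blast
  have tau_S: "\<forall>u\<in>B \<inter> S. \<tau> u = 1 \<or> \<tau> u = -1" using tau unfolding B_def by auto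
  have Z_pos: "pfun \<beta> par S x B \<tau> t (\<lambda>_. 1) > 0" if "t = 1 \<or> t = -1" for t
    using pfun_pos[OF fin_S x_S that tau_S] hat_inner[OF x] unfolding B_def by blast
  have total: "(\<Sum>\<sigma>\<in>X. W \<sigma>) > 0"
    unfolding X_def W_def pfun_total[OF fin_S x_S] using Z_pos[of 1] Z_pos[of "-1"] by simp
  have Z_s: "(\<Sum>\<sigma>\<in>{\<sigma>\<in>X. \<sigma> x = s}. W \<sigma>) = pfun \<beta> par S x B \<tau> s (\<lambda>_. 1)"
    unfolding pfun_def X_def W_def by simp
  have Q: "Q V r par H \<beta> \<tau> s x \<eta> = N \<eta> / pfun \<beta> par S x B \<tau> s (\<lambda>_. 1)" for \<eta>
  proof -
    have "Q V r par H \<beta> \<tau> s x \<eta> =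
        (N \<eta> / (\<Sum>\<sigma>\<in>X. W \<sigma>)) / ((\<Sum>\<sigma>\<in>{\<sigma>\<in>X. \<sigma> x = s}. W \<sigma>) / (\<Sum>\<sigma>\<in>X. W \<sigma>))"
      unfolding Q_def mu_def gibbs_prob_def N_def X_def W_def S_def B_def L_def by simp
    then show ?thesis using total unfolding Z_s by simp
  qed
  have spins: "\<forall>\<sigma>\<in>X. \<forall>u\<in>L. \<sigma> u = 1 \<or> \<sigma> u = -1"
  proof (intro ballI)
    fix \<sigma> u assume "\<sigma> \<in> X" "u \<in> L"
    moreover have "L \<subseteq> S" unfolding L_def S_def hleaves_def by blast
    ultimately show "\<sigma> u = 1 \<or> \<sigma> u = -1" unfolding X_def using adm_spin[of \<sigma> S] by blast
  qed
  have "L \<subseteq> H" unfolding L_def hleaves_def leaves_def by blast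
  then have fin_L: "finite L" using hat_finite by (rule finite_subset)
  have fin_X: "finite X" unfolding X_def using fin_S by (rule adm_finite)
  have "Qexp V r par H \<beta> \<tau> s x g = (\<Sum>\<eta>\<in>configs L. N \<eta> * g \<eta>) / pfun \<beta> par S x B \<tau> s (\<lambda>_. 1)"
    unfolding Qexp_def L_def[symmetric] Q by (simp add: sum_divide_distrib)
  also have "(\<Sum>\<eta>\<in>configs L. N \<eta> * g \<eta>) = (\<Sum>\<sigma>\<in>{\<sigma>\<in>X. \<sigma> x = s}. W \<sigma> * g (restrict \<sigma> L))"
    unfolding N_def by (rule sum_configs_fibres[OF fin_X fin_L spins])
  also have "\<dots> = pfun \<beta> par S x B \<tau> s (\<lambda>\<sigma>. g (restrict \<sigma> L))"
    unfolding pfun_def X_def W_def ..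
  finally show ?thesis unfolding S_def B_def L_def .
qed

text \<open>Conditioning on the spin of v, the spin of a child w is distributed according to the
  messages; hence an observable of the leaves below w has Q_v-expectation equal to the
  message-weighted mixture of its Q_w-expectations.\<close>
lemma Qexp_child:
  fixes \<beta> :: real and \<tau> :: "'v \<Rightarrow> real" and g :: "('v \<Rightarrow> real) \<Rightarrow> real"
  assumes v: "v \<in> H" and w: "w \<in> children H r par v"
    and tau: "\<forall>u\<in>leaves V r par. \<tau> u \<in> {-1, 1}" and s: "s = 1 \<or> s = -1"
    and g_local: "\<And>\<eta> \<eta>'. \<forall>u\<in>hleaves V r par H w. \<eta> u = \<eta>' u \<Longrightarrow> g \<eta> = g \<eta>'"
  defines "z \<equiv> \<lambda>t. pfun \<beta> par (subtree V par w) w (leaves V r par) \<tau> t (\<lambda>_. 1)"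
  shows "Qexp V r par H \<beta> \<tau> s v g = msg \<beta> s (\<lambda>t. z t * Qexp V r par H \<beta> \<tau> t w g) / msg \<beta> s z"
proof -
  define S where "S = subtree V par v"
  define D where "D = subtree V par w"
  define B where "B = leaves V r par"
  define L where "L = hleaves V r par H v"
  define f where "f \<sigma> = g (restrict \<sigma> L)" for \<sigma>
  have w_props: "w \<in> H" "w \<in> V" "w \<noteq> r" "par w = v" using hat_children[OF w] by auto
  have fin_S: "finite S" unfolding S_def by (rule subtree_finite)
  note cut = child_cut[OF w_props(2-4), folded S_def D_def]
  note D_S = cut(1) and v_S = cut(2) and w_D = cut(3) and closed_D = cut(4) and closed_rest = cut(5)
  have leaves_w: "hleaves V r par H w \<subseteq> L" "hleaves V r par H w \<subseteq> D"
    using D_S unfolding L_def hleaves_def S_def D_def by auto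
  have f_local: "f \<sigma> = f \<sigma>'" if "\<forall>u\<in>D. \<sigma> u = \<sigma>' u" for \<sigma> \<sigma>'
    unfolding f_def by (rule g_local) (use that leaves_w in auto)
  have f_w: "f = (\<lambda>\<sigma>. g (restrict \<sigma> (hleaves V r par H w)))"
    unfolding f_def by (rule ext, rule g_local) (use leaves_w in auto)
  have tau_S: "\<forall>u\<in>B \<inter> S. \<tau> u = 1 \<or> \<tau> u = -1" using tau unfolding B_def by auto
  have z_pos: "z t > 0" if "t = 1 \<or> t = -1" for t
    unfolding z_def by (rule pfun_pos[OF subtree_finite subtree_self[OF w_props(2)] that])
      (use tau hat_inner[OF w_props(1)] in auto)
  have rest_pos: "pfun \<beta> par (S - D) v B \<tau> s (\<lambda>_. 1) > 0"
    by (rule pfun_pos[OF finite_Diff[OF fin_S] v_S s]) (use tau_S hat_inner[OF v] in \<open>auto simp: B_def\<close>)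
  have child: "pfun \<beta> par D w B \<tau> t f = z t * Qexp V r par H \<beta> \<tau> t w g" if "t = 1 \<or> t = -1" for t
  proof -
    have "Qexp V r par H \<beta> \<tau> t w g = pfun \<beta> par D w B \<tau> t f / z t"
      unfolding Qexp_pfun[OF w_props(1) tau that] z_def D_def B_def f_w ..
    then show ?thesis using z_pos[OF that] by simp
  qed
  have split_f: "pfun \<beta> par S v B \<tau> s f =
      pfun \<beta> par (S - D) v B \<tau> s (\<lambda>_. 1) * msg \<beta> s (\<lambda>t. pfun \<beta> par D w B \<tau> t f)"
    by (rule pfun_split[OF fin_S D_S v_S w_D w_props(4) closed_rest closed_D f_local])
  have split_1: "pfun \<beta> par S v B \<tau> s (\<lambda>_. 1) = pfun \<beta> par (S - D) v B \<tau> s (\<lambda>_. 1) * msg \<beta> s z"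
    unfolding z_def D_def[symmetric] B_def[symmetric]
    by (rule pfun_split[OF fin_S D_S v_S w_D w_props(4) closed_rest closed_D]) simp
  have "Qexp V r par H \<beta> \<tau> s v g = pfun \<beta> par S v B \<tau> s f / pfun \<beta> par S v B \<tau> s (\<lambda>_. 1)"
    unfolding Qexp_pfun[OF v tau s] S_def B_def f_def L_def ..
  also have "\<dots> = msg \<beta> s (\<lambda>t. pfun \<beta> par D w B \<tau> t f) / msg \<beta> s z"
    unfolding split_f split_1 using rest_pos by simp
  also have "msg \<beta> s (\<lambda>t. pfun \<beta> par D w B \<tau> t f) = msg \<beta> s (\<lambda>t. z t * Qexp V r par H \<beta> \<tau> t w g)"
    by (simp add: msg_def child)
  finally show ?thesis .
qed

lemma Qexp_difference_child:
  assumes v: "v \<in> H" and w: "w \<in> children H r par v"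
    and tau: "\<forall>u\<in>leaves V r par. \<tau> u \<in> {-1, 1}"
    and g_local: "\<And>\<eta> \<eta>'. \<forall>u\<in>hleaves V r par H w. \<eta> u = \<eta>' u \<Longrightarrow> g \<eta> = g \<eta>'"
  shows "Qexp V r par H \<beta> \<tau> 1 v g - Qexp V r par H \<beta> \<tau> (-1) v g =
    tanh \<beta> * Dstar V r par \<beta> \<tau> w * (Qexp V r par H \<beta> \<tau> 1 w g - Qexp V r par H \<beta> \<tau> (-1) w g)"
proof -
  define z where "z = (\<lambda>t. pfun \<beta> par (subtree V par w) w (leaves V r par) \<tau> t (\<lambda>_. 1))"
  have w_props: "w \<in> H" "w \<in> V" using hat_children[OF w] by auto
  have z: "z 1 > 0" "z (-1) > 0" unfolding z_def
    by (rule pfun_pos[OF subtree_finite subtree_self[OF w_props(2)]];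
        use tau hat_inner[OF w_props(1)] in auto)+
  have xstar: "xstar V r par \<beta> \<tau> w = ln (z 1 / z (-1))"
    unfolding xstar_def mu_root[OF w_props(2)] using z unfolding z_def by simp
  have mixture: "Qexp V r par H \<beta> \<tau> s v g = msg \<beta> s (\<lambda>t. z t * Qexp V r par H \<beta> \<tau> t w g) / msg \<beta> s z"
    if "s = 1 \<or> s = -1" for s
    unfolding z_def using Qexp_child[OF v w tau that g_local] .
  show ?thesis
    unfolding mixture[of 1, simplified] mixture[of "-1", simplified] mixture_difference[OF z]
      Dstar_def xstar by (simp add: mult.assoc)
qed

end

end

theorem mainTheorem9:
  fixes V H :: "'v set" and r :: 'v and par :: "'v \<Rightarrow> 'v"
    and \<beta> :: real and \<tau> :: "'v \<Rightarrow> real" and v :: 'v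
  assumes tree: "rooted_tree V r par"
    and beta: "\<beta> > 0"
    and tau: "\<forall>u\<in>leaves V r par. \<tau> u \<in> {-1, 1}"
    and hat: "root_subtree V r par H"
    and v: "v \<in> H - leaves H r par"
  shows "mm V r par H \<beta> \<tau> v =
    tanh \<beta> * (\<Sum>w\<in>children H r par v.
       Dstar V r par \<beta> \<tau> w *
       ((\<Sum>\<eta>\<in>configs (hleaves V r par H w).
            Q V r par H \<beta> \<tau> 1 w \<eta> * fth (tanh \<beta>) (xhat V r par H \<beta> \<eta> w))
      - (\<Sum>\<eta>\<in>configs (hleaves V r par H w).
            Q V r par H \<beta> \<tau> (-1) w \<eta> * fth (tanh \<beta>) (xhat V r par H \<beta> \<eta> w))))"
proof -
  have v_inner: "v \<in> H" "v \<notin> leaves H r par" using v by auto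
  let ?C = "children H r par v" and ?E = "Qexp V r par H \<beta> \<tau>"
  define g where "g w \<eta> = fth (tanh \<beta>) (xhat V r par H \<beta> \<eta> w)" for w \<eta>
  have recursion: "?E s v (\<lambda>\<eta>. xhat_real V r par H \<beta> \<eta> v) = (\<Sum>w\<in>?C. ?E s v (g w))" for s
    unfolding Qexp_sum[symmetric] g_def
    by (rule Qexp_cong) (rule xhat_recursion[OF tree hat v_inner])
  have child: "?E 1 v (g w) - ?E (-1) v (g w) = tanh \<beta> * Dstar V r par \<beta> \<tau> w * (?E 1 w (g w) - ?E (-1) w (g w))"
    if w: "w \<in> ?C" for w
  proof (rule Qexp_difference_child[OF tree hat v_inner(1) w tau])
    fix \<eta> \<eta>' :: "'v \<Rightarrow> real" assume "\<forall>u\<in>hleaves V r par H w. \<eta> u = \<eta>' u"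
    then show "g w \<eta> = g w \<eta>'"
      unfolding g_def using xhat_local[OF tree hat] hat_children[OF tree hat w] by metis
  qed
  have "mm V r par H \<beta> \<tau> v = (\<Sum>w\<in>?C. ?E 1 v (g w) - ?E (-1) v (g w))"
    unfolding mm_Qexp recursion sum_subtractf ..
  also have "\<dots> = tanh \<beta> * (\<Sum>w\<in>?C. Dstar V r par \<beta> \<tau> w * (?E 1 w (g w) - ?E (-1) w (g w)))"
    unfolding sum_distrib_left by (rule sum.cong) (simp_all add: child mult.assoc)
  finally show ?thesis unfolding g_def Qexp_def .
qed

end
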